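(* There is a constant $C>0$ such that the following holds. Let $a\neq b$ be points of $\mathbb{R}/\tau\mathbb{Z}$. Let $n_1<n_1+k_1$ be two consecutive elements of $Z(a,b)$ (i.e. $k_1>0$ and no element of $Z(a,b)$ lies strictly between them), and let $n_2<n_2+k_2$ be another pair of consecutive elements of $Z(a,b)$. Then $k_1<Ck_2$.
   Context: $\tau=\frac{1+\sqrt5}{2}$. For real $x$, $x\bmod\tau$ is its image in $\mathbb{R}/\tau\mathbb{Z}$. For $a,b\in\mathbb{R}/\tau\mathbb{Z}$, $(a,b)$ denotes the open arc from $a$ to $b$ in the positive direction of the circle, and $Z(a,b)$ is the set of integers $n$ with $n\bmod\tau\in(a,b)$. The constant $C$ is independent of all variables. *)

theory Defs
  imports Complex_Main
begin

definition tau :: real where "tau = (1 + sqrt 5) / 2"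

definition tmod :: "real \<Rightarrow> real" where
  "tmod x = x - tau * of_int \<lfloor>x / tau\<rfloor>"

text \<open>Points of R/tau Z are given by real representatives. x mod tau lies on the
  open positive arc from a to b iff 0 < (x - a) mod tau < (b - a) mod tau.\<close>
definition in_arc :: "real \<Rightarrow> real \<Rightarrow> real \<Rightarrow> bool" where
  "in_arc a b x \<longleftrightarrow> 0 < tmod (x - a) \<and> tmod (x - a) < tmod (b - a)"

definition Zarc :: "real \<Rightarrow> real \<Rightarrow> int set" where
  "Zarc a b = {n. in_arc a b (of_int n)}"

definition consec :: "real \<Rightarrow> real \<Rightarrow> int \<Rightarrow> int \<Rightarrow> bool" where
  "consec a b n k \<longleftrightarrow> k > 0 \<and> n \<in> Zarc a b \<and> n + k \<in> Zarc a b \<and>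
     (\<forall>m. n < m \<and> m < n + k \<longrightarrow> m \<notin> Zarc a b)"

end

theory Submission
  imports Defs "HOL-Number_Theory.Fib" "HOL-Computational_Algebra.Nth_Powers"
begin

text \<open>Let \<open>L\<close> be the length of the arc \<open>(a, b)\<close>. If \<open>n\<close> and \<open>n + k\<close> both lie in \<open>Z(a, b)\<close>,
  then \<open>k\<close> is within \<open>L\<close> of some \<open>w \<tau>\<close>. As \<open>\<tau>\<close> is badly approximable (the norm
  \<open>k\<^sup>2 - k w - w\<^sup>2\<close> of \<open>k - w \<tau>\<close> is a nonzero integer and its conjugate factor is \<open>O(k)\<close>),
  every gap exceeds \<open>1 / (4 L)\<close>. Conversely, two consecutive Fibonacci vectors span a
  unimodular lattice whose generators approximate multiples of \<open>\<tau>\<close> with total error below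
  \<open>L / 2\<close>; rounding the midpoint of the arc in this lattice produces an element of \<open>Z(a, b)\<close>
  at most \<open>O(1 / L)\<close> after \<open>n\<close>.\<close>

lemma tau_sq: "tau\<^sup>2 = tau + 1"
  by (simp add: tau_def power2_eq_square algebra_simps)

lemma tau_gt_1: "tau > 1" and tau_less_2: "tau < 2"
proof -
  have "2 < sqrt 5" "sqrt 5 < 3"
    by (simp_all add: real_less_rsqrt real_less_lsqrt)
  then show "tau > 1" "tau < 2"
    by (simp_all add: tau_def)
qed

lemma tau_minus_1_mult: "(tau - 1) * tau = 1"
  using tau_sq by (simp add: power2_eq_square algebra_simps)

lemma tau_minus_1_power_mult: "(tau - 1) ^ n * tau ^ n = 1"
  by (simp add: tau_minus_1_mult flip: power_mult_distrib)

lemma not_is_square_5: "\<not> is_square (5::nat)"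
  using is_nth_power_prime_power_nat_iff[of 5 2 1] by simp

lemma golden_norm_eq_0_iff: "(k::int)\<^sup>2 - k * w - w\<^sup>2 = 0 \<longleftrightarrow> k = 0 \<and> w = 0"
proof
  assume norm: "k\<^sup>2 - k * w - w\<^sup>2 = 0"
  have "(2 * k - w)\<^sup>2 = 5 * w\<^sup>2"
    using norm by (simp add: power2_eq_square algebra_simps)
  then have "int ((nat \<bar>2 * k - w\<bar>)\<^sup>2) = int (5 * (nat \<bar>w\<bar>)\<^sup>2)"
    by simp
  then have "is_square (5 * (nat \<bar>w\<bar>)\<^sup>2)"
    by (metis of_nat_eq_iff is_nth_power_nth_power)
  then have "w = 0"
    using not_is_square_5 is_nth_power_mult_cancel_right[of 2 "(nat \<bar>w\<bar>)\<^sup>2" 5] by fastforce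
  with norm show "k = 0 \<and> w = 0"
    by simp
qed simp

lemma golden_norm_factor:
  "(of_int k - of_int w * tau) * (of_int k - of_int w * (1 - tau)) = real_of_int (k\<^sup>2 - k * w - w\<^sup>2)"
  using tau_sq by simp algebra

lemma tau_badly_approximable:
  assumes "k > 0"
  shows "1 \<le> 4 * of_int k * \<bar>of_int k - of_int w * tau\<bar>"
proof (cases "\<bar>of_int k - of_int w * tau\<bar> < 1")
  case True
  define d where "d = of_int k - of_int w * tau"
  have "\<bar>of_int w\<bar> * 1 \<le> \<bar>of_int w\<bar> * tau"
    using tau_gt_1 by (intro mult_left_mono) auto
  moreover have "\<bar>of_int w * tau\<bar> < of_int k + 1"
    using True assms by (auto simp: abs_less_iff)
  ultimately have "\<bar>w\<bar> \<le> k"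
    using tau_gt_1 by (simp add: abs_mult)
  then have "\<bar>of_int w\<bar> * (2 * tau - 1) \<le> of_int k * 3"
    using tau_gt_1 tau_less_2 by (intro mult_mono) (simp_all flip: of_int_abs)
  have "of_int k - of_int w * (1 - tau) = d + of_int w * (2 * tau - 1)"
    by (simp add: d_def algebra_simps)
  also have "\<bar>\<dots>\<bar> \<le> \<bar>d\<bar> + \<bar>of_int w\<bar> * (2 * tau - 1)"
    using tau_gt_1 abs_triangle_ineq[of d "of_int w * (2 * tau - 1)"] by (simp add: abs_mult)
  also have "\<dots> \<le> 4 * of_int k"
    using True \<open>\<bar>of_int w\<bar> * (2 * tau - 1) \<le> of_int k * 3\<close> assms unfolding d_def
    by linarith
  finally have conj_bound: "\<bar>of_int k - of_int w * (1 - tau)\<bar> \<le> 4 * of_int k" .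
  have "1 \<le> \<bar>real_of_int (k\<^sup>2 - k * w - w\<^sup>2)\<bar>"
    using golden_norm_eq_0_iff[of k w] assms by linarith
  also have "\<dots> = \<bar>d\<bar> * \<bar>of_int k - of_int w * (1 - tau)\<bar>"
    unfolding d_def abs_mult[symmetric] golden_norm_factor ..
  also have "\<dots> \<le> \<bar>d\<bar> * (4 * of_int k)"
    using conj_bound by (simp add: mult_left_mono)
  finally show ?thesis
    by (simp add: d_def mult_ac)
next
  case False
  then have "1 * 1 \<le> of_int k * \<bar>of_int k - of_int w * tau\<bar>"
    using assms by (intro mult_mono) auto
  then show ?thesis
    by linarith
qed

lemma fib_tau_approx: "real (fib (Suc n)) - real (fib n) * tau = (1 - tau) ^ n"
proof -
  have "1 - tau = (1 - sqrt 5) / 2"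
    by (simp add: tau_def field_simps)
  then show ?thesis
    by (simp add: fib_closed_form tau_def field_simps)
qed

lemma fib_le_tau_power: "real (fib n) \<le> tau ^ n"
proof (induction n rule: fib.induct)
  case (3 n)
  have "tau ^ Suc (Suc n) = tau ^ n * tau\<^sup>2"
    by (simp add: power2_eq_square)
  also have "\<dots> = tau ^ Suc n + tau ^ n"
    by (simp add: tau_sq algebra_simps)
  finally show ?case
    using "3.IH" by simp
qed (use tau_gt_1 in simp_all)

lemma tmod_less_tau: "tmod x < tau"
proof -
  have "x < (of_int \<lfloor>x / tau\<rfloor> + 1) * tau"
    using tau_gt_1 by (simp add: floor_divide_upper)
  then show ?thesis
    by (simp add: tmod_def algebra_simps)
qed

lemma tmod_add_multiple:
  assumes "0 \<le> t" "t < tau"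
  shows "tmod (t + tau * of_int w) = t"
proof -
  have "\<lfloor>(t + tau * of_int w) / tau\<rfloor> = w"
    using assms tau_gt_1 by (simp add: floor_eq_iff field_simps)
  then show ?thesis
    by (simp add: tmod_def)
qed

lemma tmod_decomp:
  obtains w :: int where "x = tmod x + tau * of_int w"
  by (rule that[of "\<lfloor>x / tau\<rfloor>"]) (simp add: tmod_def)

lemma Zarc_diff_near_multiple:
  assumes "n \<in> Zarc a b" "m \<in> Zarc a b"
  obtains w :: int where "\<bar>of_int (m - n) - of_int w * tau\<bar> < tmod (b - a)"
proof -
  obtain v where v: "of_int n - a = tmod (of_int n - a) + tau * of_int v"
    by (rule tmod_decomp)
  obtain v' where v': "of_int m - a = tmod (of_int m - a) + tau * of_int v'"
    by (rule tmod_decomp)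
  have "of_int (m - n) - of_int (v' - v) * tau = tmod (of_int m - a) - tmod (of_int n - a)"
    using v v' by (simp add: algebra_simps)
  with assms show ?thesis
    by (intro that[of "v' - v"]) (auto simp: Zarc_def in_arc_def)
qed

lemma in_Zarc_near_midpoint:
  assumes "\<bar>of_int m - (a + tmod (b - a) / 2) - of_int w * tau\<bar> < tmod (b - a) / 2"
  shows "m \<in> Zarc a b"
proof -
  define t where "t = of_int m - a - of_int w * tau"
  have "0 < t" "t < tmod (b - a)"
    using assms unfolding t_def abs_less_iff by linarith+
  then have "tmod (of_int m - a) = t"
    using tmod_add_multiple[of t w] tmod_less_tau[of "b - a"] by (simp add: t_def algebra_simps)
  with \<open>0 < t\<close> \<open>t < tmod (b - a)\<close> show ?thesis
    by (simp add: Zarc_def in_arc_def)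
qed

lemma Zarc_gap_lower:
  assumes "n \<in> Zarc a b" "n + k \<in> Zarc a b" "k > 0"
  shows "1 < 4 * of_int k * tmod (b - a)"
proof -
  obtain w where "\<bar>of_int k - of_int w * tau\<bar> < tmod (b - a)"
    using Zarc_diff_near_multiple[OF assms(1,2)] by auto
  then have "4 * of_int k * \<bar>of_int k - of_int w * tau\<bar> < 4 * of_int k * tmod (b - a)"
    using assms(3) by (intro mult_strict_left_mono) auto
  with tau_badly_approximable[OF assms(3), of w] show ?thesis
    by linarith
qed

lemma ex_power_between:
  fixes x M :: real
  assumes "1 < x" "1 \<le> M"
  obtains j where "x ^ j \<le> M" "M < x ^ Suc j"
proof -
  obtain n where "M < x ^ n"
    using real_arch_pow[OF assms(1)] by blast
  then obtain j where "\<forall>i\<le>j. \<not> M < x ^ i" "M < x ^ Suc j"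
    using ex_least_nat_less[of "\<lambda>i. M < x ^ i" n] assms(2) by auto
  then show ?thesis
    using that by (meson le_refl not_less)
qed

lemma linear_system_2x2_solvable:
  fixes a b c d x y :: "'a::field"
  assumes "a * d - b * c \<noteq> 0"
  obtains \<alpha> \<beta> where "\<alpha> * a + \<beta> * b = x" "\<alpha> * c + \<beta> * d = y"
proof
  define D where "D = a * d - b * c"
  have "D \<noteq> 0"
    using assms by (simp add: D_def)
  then show "(x * d - b * y) / D * a + (a * y - x * c) / D * b = x"
    "(x * d - b * y) / D * c + (a * y - x * c) / D * d = y"
    by (simp_all add: divide_simps) (simp_all add: D_def algebra_simps)
qed

text \<open>Write \<open>(p + q, y)\<close> in the basis \<open>(p, p - r \<theta>)\<close>, \<open>(q, q - s \<theta>)\<close> and round both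
  coordinates down.\<close>

lemma exists_lattice_point_near:
  fixes p q r s :: int and \<theta> y :: real
  assumes "p > 0" "q \<ge> 0" "p * s \<noteq> q * r" "\<theta> \<noteq> 0"
  obtains u w :: int where "0 < u" "u \<le> p + q"
    "\<bar>of_int u - of_int w * \<theta> - y\<bar> \<le> \<bar>of_int p - of_int r * \<theta>\<bar> + \<bar>of_int q - of_int s * \<theta>\<bar>"
proof -
  define d1 where "d1 = of_int p - of_int r * \<theta>"
  define d2 where "d2 = of_int q - of_int s * \<theta>"
  have "of_int p * d2 - of_int q * d1 = \<theta> * of_int (q * r - p * s)"
    by (simp add: d1_def d2_def algebra_simps)
  then have "of_int p * d2 - of_int q * d1 \<noteq> 0"
    using assms(3,4) by (auto simp only: mult_eq_0_iff of_int_eq_0_iff)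
  then obtain \<alpha> \<beta> where \<alpha>\<beta>: "\<alpha> * of_int p + \<beta> * of_int q = of_int (p + q)" "\<alpha> * d1 + \<beta> * d2 = y"
    by (rule linear_system_2x2_solvable)
  define fa where "fa = \<alpha> - of_int \<lfloor>\<alpha>\<rfloor>"
  define fb where "fb = \<beta> - of_int \<lfloor>\<beta>\<rfloor>"
  have fab: "0 \<le> fa" "fa < 1" "0 \<le> fb" "fb < 1"
    unfolding fa_def fb_def by linarith+
  define u where "u = \<lfloor>\<alpha>\<rfloor> * p + \<lfloor>\<beta>\<rfloor> * q"
  define w where "w = \<lfloor>\<alpha>\<rfloor> * r + \<lfloor>\<beta>\<rfloor> * s"
  have u_eq: "of_int u = of_int (p + q) - fa * of_int p - fb * of_int q"
    using \<alpha>\<beta>(1) by (simp add: u_def fa_def fb_def algebra_simps)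
  have uw_eq: "of_int u - of_int w * \<theta> - y = - (fa * d1 + fb * d2)"
    using \<alpha>\<beta>(2) by (simp add: u_def w_def fa_def fb_def d1_def d2_def algebra_simps)
  have "fa * of_int p < of_int p" "fb * of_int q \<le> of_int q"
    using fab assms(1,2) by (simp_all add: mult_left_le_one_le)
  moreover have "0 \<le> fa * of_int p" "0 \<le> fb * of_int q"
    using fab assms(1,2) by simp_all
  ultimately have "0 < u" "u \<le> p + q"
    using u_eq by linarith+
  moreover have "\<bar>fa * d1\<bar> \<le> \<bar>d1\<bar>" "\<bar>fb * d2\<bar> \<le> \<bar>d2\<bar>"
    using fab by (simp_all add: abs_mult mult_left_le_one_le)
  then have "\<bar>of_int u - of_int w * \<theta> - y\<bar> \<le> \<bar>d1\<bar> + \<bar>d2\<bar>"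
    unfolding uw_eq abs_minus_cancel using abs_triangle_ineq[of "fa * d1" "fb * d2"] by linarith
  ultimately show ?thesis
    using that unfolding d1_def d2_def by blast
qed

lemma abs_one_minus_tau_power_sum:
  "\<bar>(1 - tau) ^ Suc n\<bar> + \<bar>(1 - tau) ^ n\<bar> = (tau - 1) ^ n * tau"
proof -
  have "\<bar>1 - tau\<bar> = tau - 1"
    using tau_gt_1 by simp
  then have "\<bar>(1 - tau) ^ Suc n\<bar> + \<bar>(1 - tau) ^ n\<bar> = (tau - 1) ^ Suc n + (tau - 1) ^ n"
    by (simp only: power_abs)
  also have "\<dots> = (tau - 1) ^ n * tau"
    by (simp add: algebra_simps)
  finally show ?thesis .
qed

text \<open>Cassini's identity makes the Fibonacci basis unimodular; the index is chosen so that the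
  errors \<open>(1 - \<tau>)\<^bsup>i+1\<^esup>\<close>, \<open>(1 - \<tau>)\<^bsup>i\<^esup>\<close> sum to just below \<open>L / 2\<close>, which keeps
  \<open>p + q = fib (i + 3)\<close> of order \<open>1 / L\<close>.\<close>

lemma fib_lattice_basis:
  assumes "0 < L" "L < 2"
  obtains p q s :: int where "0 < p" "0 \<le> q" "p * s \<noteq> q * q"
    "\<bar>of_int p - of_int q * tau\<bar> + \<bar>of_int q - of_int s * tau\<bar> < L / 2"
    "of_int (p + q) * L < 64"
proof -
  obtain j where j: "tau ^ j \<le> 2 / L" "2 / L < tau ^ Suc j"
    using ex_power_between[OF tau_gt_1, of "2 / L"] assms by auto
  define i where "i = Suc j + 1"
  define p where "p = int (fib (i + 2))"
  define q where "q = int (fib (i + 1))"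
  define s where "s = int (fib i)"
  have "p * s - q * q = - ((-1) ^ i)"
    using fib_Cassini_int[of i] by (simp add: p_def q_def s_def power2_eq_square)
  then have det: "p * s \<noteq> q * q"
    by auto
  have pos: "0 < p" "0 \<le> q"
    by (simp_all add: p_def q_def fib_neq_0_nat del: fib.simps)
  have "\<bar>of_int p - of_int q * tau\<bar> + \<bar>of_int q - of_int s * tau\<bar> = (tau - 1) ^ i * tau"
    using fib_tau_approx[of "i + 1"] fib_tau_approx[of i] abs_one_minus_tau_power_sum[of i]
    by (simp add: p_def q_def s_def)
  also have "\<dots> = (tau - 1) ^ Suc j * ((tau - 1) * tau)"
    by (simp add: i_def mult_ac)
  also have "\<dots> = (tau - 1) ^ Suc j"
    by (simp add: tau_minus_1_mult)
  also have "\<dots> < L / 2"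
  proof -
    have "(tau - 1) ^ Suc j * (2 / L) < (tau - 1) ^ Suc j * tau ^ Suc j"
      using j(2) tau_gt_1 by (intro mult_strict_left_mono) auto
    then have "(tau - 1) ^ Suc j * (2 / L) < 1"
      by (simp only: tau_minus_1_power_mult)
    then show ?thesis
      using assms(1) by (simp add: field_simps)
  qed
  finally have small: "\<bar>of_int p - of_int q * tau\<bar> + \<bar>of_int q - of_int s * tau\<bar> < L / 2" .
  have "real_of_int (p + q) = real (fib (j + 5))"
    by (simp add: p_def q_def i_def numeral_eq_Suc)
  also have "\<dots> \<le> tau ^ 5 * tau ^ j"
    using fib_le_tau_power[of "j + 5"] by (simp add: power_add mult.commute)
  also have "\<dots> \<le> tau ^ 5 * (2 / L)"
    using j(1) tau_gt_1 by (intro mult_left_mono) auto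
  finally have "of_int (p + q) * L \<le> tau ^ 5 * 2"
    using assms(1) by (simp add: field_simps)
  also have "\<dots> < 2 ^ 5 * 2"
    using power_strict_mono[OF tau_less_2, of 5] tau_gt_1 by simp
  finally show ?thesis
    using that pos det small by simp
qed

lemma Zarc_gap_upper:
  assumes "0 < tmod (b - a)"
  obtains m where "m \<in> Zarc a b" "n < m" "of_int (m - n) * tmod (b - a) < 64"
proof -
  define L where "L = tmod (b - a)"
  have "L < 2"
    using tmod_less_tau[of "b - a"] tau_less_2 by (simp add: L_def)
  then obtain p q s where pqs: "0 < p" "0 \<le> q" "p * s \<noteq> q * q"
    and small: "\<bar>of_int p - of_int q * tau\<bar> + \<bar>of_int q - of_int s * tau\<bar> < L / 2"
    and size: "of_int (p + q) * L < 64"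
    using fib_lattice_basis assms unfolding L_def by blast
  obtain u w where u: "0 < u" "u \<le> p + q"
    and near: "\<bar>of_int u - of_int w * tau - (a + L / 2 - of_int n)\<bar> \<le>
      \<bar>of_int p - of_int q * tau\<bar> + \<bar>of_int q - of_int s * tau\<bar>"
    by (rule exists_lattice_point_near[OF pqs, of tau]) (use tau_gt_1 in auto)
  have "n + u \<in> Zarc a b"
    using near small by (intro in_Zarc_near_midpoint[where w = w]) (simp add: L_def algebra_simps)
  moreover have "of_int u * L \<le> of_int (p + q) * L"
    using u(2) assms by (intro mult_right_mono) (auto simp: L_def)
  ultimately show ?thesis
    using that[of "n + u"] u(1) size by (simp add: L_def)
qed

theorem lemma12:
  shows "\<exists>C::real. C > 0 \<and>
    (\<forall>a b :: real. \<forall>n1 k1 n2 k2 :: int.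
       tmod a \<noteq> tmod b \<longrightarrow> consec a b n1 k1 \<longrightarrow> consec a b n2 k2 \<longrightarrow>
       real_of_int k1 < C * real_of_int k2)"
proof (intro exI[of _ 256] conjI allI impI)
  fix a b :: real and n1 k1 n2 k2 :: int
  assume c1: "consec a b n1 k1" and c2: "consec a b n2 k2"
  define L where "L = tmod (b - a)"
  have "0 < L"
    using c1 by (auto simp: L_def consec_def Zarc_def in_arc_def)
  then obtain m where m: "m \<in> Zarc a b" "n1 < m" "of_int (m - n1) * L < 64"
    using Zarc_gap_upper unfolding L_def by blast
  have "k1 \<le> m - n1"
    using c1 m(1,2) unfolding consec_def by force
  then have "of_int k1 * L \<le> of_int (m - n1) * L"
    using \<open>0 < L\<close> by (intro mult_right_mono) auto
  moreover have "1 < 4 * of_int k2 * L"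
    using Zarc_gap_lower c2 unfolding consec_def L_def by blast
  ultimately have "of_int k1 * L < (256 * of_int k2) * L"
    using m(3) by linarith
  then show "real_of_int k1 < 256 * real_of_int k2"
    using \<open>0 < L\<close> by (simp only: mult_less_cancel_right_pos)
qed simp

end
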